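(* Let $\lambda>1$, $A=\mathrm{diag}(1,\lambda)$, and $f(x)=\tfrac12 x^TAx$ on $\mathbb{R}^2$. Consider the iteration $x_{k+1}=x_k-\alpha_kg_k$, $g_k=Ax_k$, where $x_1\in\mathbb{R}^2$, $x_2=x_1-\alpha_1g_1$ for some $\alpha_1>0$, and for $k\ge 2$ $$\alpha_k=\gamma_k\frac{s_{k-1}^Ts_{k-1}}{s_{k-1}^Ty_{k-1}}+(1-\gamma_k)\frac{s_{k-1}^Ty_{k-1}}{y_{k-1}^Ty_{k-1}},\qquad s_{k-1}=x_k-x_{k-1},\ y_{k-1}=g_k-g_{k-1},$$ with $\gamma_k\in(0,1)$ for all $k$. Assume $g_1^{(i)}\neq0$ and $g_2^{(i)}\ne0$ for $i=1,2$. Let $q_k=(g_k^{(1)})^2/(g_k^{(2)})^2$, $M_k=\log q_k$, let $\theta$ be a root of $\theta^2-\theta+2=0$, and $\xi_k=M_k+(\theta-1)M_{k-1}$. If $|\xi_2|>8\log\lambda$, then there exists $c_1>0$ such that for all $k\ge2$, $$\max_{-1\le i\le 3}M_{k+i}\ge(\sqrt2-1)^2 2^{k/2}c_1-2c_1,\qquad \min_{-1\le i\le 3}M_{k+i}\le-(\sqrt2-1)^2 2^{k/2}c_1+2c_1.$$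
   Context: $g_k^{(i)}$ denotes the $i$-th component of $g_k$; under these assumptions all components stay nonzero so $M_k$ is defined for all $k\ge1$. $\theta$ is complex and $|\cdot|$ is the complex modulus. *)

theory Defs
  imports "HOL-Analysis.Analysis"
begin

definition diagA :: "real \<Rightarrow> real^2^2" where
  "diagA lam = (\<chi> i j. if i = j then (if i = 1 then 1 else lam) else 0)"

end

theory Submission
  imports Defs
begin

(* Write u_k, v_k for the components of g_k.  On this quadratic u_{k+1} = (1 - \<alpha>_k) u_k and
   v_{k+1} = (1 - lam \<alpha>_k) v_k, and the hybrid step is an explicit function of u_{k-1}, v_{k-1}
   lying strictly between 1/lam and 1.  This yields M_{k+1} = M_k - 2 M_{k-1} + \<delta>_k with
   0 \<le> \<delta>_k \<le> 2 ln lam.  The characteristic roots of M_{k+1} = M_k - 2 M_{k-1} are \<theta> and its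
   conjugate, of modulus sqrt 2, and \<xi>_{k+1} = \<theta> \<xi>_k + \<delta>_k, so |\<xi>_k| grows like 2^{k/2} once |\<xi>_2|
   dominates the perturbation.  As |\<xi>_k| \<le> |M_k| + sqrt 2 |M_{k-1}| and M_{k+2} is -2 M_{k-1} - M_k
   up to 2 \<delta>, the values M_{k-1}, M_k, M_{k+2} cannot all be small; this gives both bounds with
   c_1 = 2 ln lam. *)

lemma diagA_mult_vec_nth:
  "(diagA lam *v y) $ 1 = y $ 1" "(diagA lam *v y) $ 2 = lam * y $ 2"
  by (simp_all add: diagA_def matrix_vector_mult_def sum_2)

lemma inner_vec2: "(y::real^2) \<bullet> z = y$1 * z$1 + y$2 * z$2"
  by (simp add: inner_vec_def sum_2)

(* The step \<alpha>_k as a function of the previous gradient (u, v): on a quadratic with Hessian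
   diag(1, lam), s_{k-1} and y_{k-1} are multiples of g_{k-1}, so the two Barzilai-Borwein
   quotients become g'g / g'Ag and g'Ag / g'A^2g for g = g_{k-1}. *)
definition hybrid_bb_step :: "real \<Rightarrow> real \<Rightarrow> real \<Rightarrow> real \<Rightarrow> real" where
  "hybrid_bb_step lam \<gamma> u v =
     \<gamma> * ((u^2 + v^2) / (u^2 + lam * v^2)) + (1 - \<gamma>) * ((u^2 + lam * v^2) / (u^2 + lam^2 * v^2))"

lemma hybrid_bb_step_factors:
  assumes lam: "lam > 1" and \<gamma>: "0 < \<gamma>" "\<gamma> < 1" and uv: "u \<noteq> 0" "v \<noteq> 0"
  obtains B C where "0 < C" "C \<le> B" "B \<le> lam * C"
    "1 - hybrid_bb_step lam \<gamma> u v = (lam - 1) * v^2 * B"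
    "1 - lam * hybrid_bb_step lam \<gamma> u v = - ((lam - 1) * u^2 * C)"
proof -
  define Q where "Q = u^2 + lam * v^2"
  define R where "R = u^2 + lam^2 * v^2"
  have "u^2 > 0" "v^2 > 0" using uv by auto
  then have QR: "Q > 0" "R > 0" unfolding Q_def R_def using lam by (auto intro: add_pos_pos)
  have step_eq: "hybrid_bb_step lam \<gamma> u v = \<gamma> * ((u^2 + v^2) / Q) + (1 - \<gamma>) * (Q / R)"
    unfolding hybrid_bb_step_def Q_def R_def ..
  have gaps: "Q - (u^2 + v^2) = (lam - 1) * v^2" "R - Q = lam * (lam - 1) * v^2"
    "Q - lam * (u^2 + v^2) = - ((lam - 1) * u^2)" "R - lam * Q = - ((lam - 1) * u^2)"
    unfolding Q_def R_def by (simp_all add: algebra_simps power2_eq_square)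
  show ?thesis
  proof (rule that[of "\<gamma> / Q + (1 - \<gamma>) / R" "\<gamma> / Q + (1 - \<gamma>) * lam / R"])
    show "0 < \<gamma> / Q + (1 - \<gamma>) / R" using QR \<gamma> by (simp add: add_pos_pos)
    show "\<gamma> / Q + (1 - \<gamma>) / R \<le> \<gamma> / Q + (1 - \<gamma>) * lam / R"
      using QR \<gamma> lam by (simp add: divide_right_mono)
    show "\<gamma> / Q + (1 - \<gamma>) * lam / R \<le> lam * (\<gamma> / Q + (1 - \<gamma>) / R)"
      using QR \<gamma> lam by (simp add: algebra_simps divide_right_mono mult_left_mono)
    have "1 - hybrid_bb_step lam \<gamma> u v = \<gamma> * ((Q - (u^2 + v^2)) / Q) + (1 - \<gamma>) * ((R - Q) / R)"
      unfolding step_eq using QR by (simp add: field_simps)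
    then show "1 - hybrid_bb_step lam \<gamma> u v = (lam - 1) * v^2 * (\<gamma> / Q + (1 - \<gamma>) * lam / R)"
      unfolding gaps using QR by (simp add: field_simps)
    have "1 - lam * hybrid_bb_step lam \<gamma> u v
        = \<gamma> * ((Q - lam * (u^2 + v^2)) / Q) + (1 - \<gamma>) * ((R - lam * Q) / R)"
      unfolding step_eq using QR by (simp add: field_simps)
    then show "1 - lam * hybrid_bb_step lam \<gamma> u v = - ((lam - 1) * u^2 * (\<gamma> / Q + (1 - \<gamma>) / R))"
      unfolding gaps using QR by (simp add: field_simps)
  qed
qed

locale hybrid_bb_iteration =
  fixes lam :: real and x g :: "nat \<Rightarrow> real^2" and \<alpha> \<gamma> :: "nat \<Rightarrow> real"
  assumes lam_gt_1: "lam > 1"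
    and grad_eq: "g k = diagA lam *v x k"
    and alpha_1_pos: "\<alpha> 1 > 0"
    and iter: "k \<ge> 1 \<Longrightarrow> x (Suc k) = x k - \<alpha> k *\<^sub>R g k"
    and step: "k \<ge> 2 \<Longrightarrow>
       \<alpha> k = \<gamma> k * (((x k - x (k-1)) \<bullet> (x k - x (k-1))) / ((x k - x (k-1)) \<bullet> (g k - g (k-1))))
           + (1 - \<gamma> k) * (((x k - x (k-1)) \<bullet> (g k - g (k-1))) / ((g k - g (k-1)) \<bullet> (g k - g (k-1))))"
    and gamma: "k \<ge> 2 \<Longrightarrow> 0 < \<gamma> k \<and> \<gamma> k < 1"
    and grad_1_nonzero: "g 1 $ i \<noteq> 0"
    and grad_2_nonzero: "g 2 $ i \<noteq> 0"
begin

definition log_ratio :: "nat \<Rightarrow> real" where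
  "log_ratio k = ln ((g k $ 1)^2 / (g k $ 2)^2)"

lemma x_Suc_nth:
  assumes "k \<ge> 1"
  shows "x (Suc k) $ 1 = x k $ 1 - \<alpha> k * g k $ 1" "x (Suc k) $ 2 = x k $ 2 - \<alpha> k * g k $ 2"
  using iter[OF assms] by simp_all

lemma grad_nth: "g k $ 1 = x k $ 1" "g k $ 2 = lam * x k $ 2"
  by (simp_all add: grad_eq diagA_mult_vec_nth)

lemma grad_Suc_nth:
  assumes "k \<ge> 1"
  shows "g (Suc k) $ 1 = (1 - \<alpha> k) * g k $ 1" "g (Suc k) $ 2 = (1 - lam * \<alpha> k) * g k $ 2"
  unfolding grad_nth x_Suc_nth[OF assms] by (simp_all add: algebra_simps)

lemma alpha_eq_hybrid_bb_step:
  assumes k: "k \<ge> 2" and nz: "\<alpha> (k-1) \<noteq> 0"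
  shows "\<alpha> k = hybrid_bb_step lam (\<gamma> k) (g (k-1) $ 1) (g (k-1) $ 2)"
proof -
  obtain j where j: "k = Suc j" "j \<ge> 1" using k by (cases k) auto
  define u v where "u = g j $ 1" and "v = g j $ 2"
  have "(x k - x j) \<bullet> (x k - x j) = \<alpha> j ^ 2 * (u^2 + v^2)"
    "(x k - x j) \<bullet> (g k - g j) = \<alpha> j ^ 2 * (u^2 + lam * v^2)"
    "(g k - g j) \<bullet> (g k - g j) = \<alpha> j ^ 2 * (u^2 + lam^2 * v^2)"
    using j(2) unfolding j(1) u_def v_def inner_vec2
    by (simp_all add: x_Suc_nth grad_nth power2_eq_square algebra_simps)
  moreover have "\<alpha> j ^ 2 \<noteq> 0" using nz j by simp
  ultimately show ?thesis
    using step[OF k] j by (simp add: hybrid_bb_step_def u_def v_def)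
qed

lemma grad_Suc_factors:
  assumes k: "k \<ge> 2" and nz: "\<alpha> (k-1) \<noteq> 0" "g (k-1) $ 1 \<noteq> 0" "g (k-1) $ 2 \<noteq> 0"
  obtains B C where "0 < C" "C \<le> B" "B \<le> lam * C" "\<alpha> k > 0"
    "g (Suc k) $ 1 = (lam - 1) * (g (k-1) $ 2)^2 * B * g k $ 1"
    "g (Suc k) $ 2 = - ((lam - 1) * (g (k-1) $ 1)^2 * C) * g k $ 2"
proof -
  obtain B C where BC: "0 < C" "C \<le> B" "B \<le> lam * C"
    "1 - \<alpha> k = (lam - 1) * (g (k-1) $ 2)^2 * B"
    "1 - lam * \<alpha> k = - ((lam - 1) * (g (k-1) $ 1)^2 * C)"
    using hybrid_bb_step_factors[OF lam_gt_1 _ _ nz(2,3), of "\<gamma> k"] gamma[OF k]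
    unfolding alpha_eq_hybrid_bb_step[OF k nz(1)] by blast
  have "0 < (lam - 1) * (g (k-1) $ 1)^2 * C" using BC(1) nz(2) lam_gt_1 by simp
  then have "lam * \<alpha> k > 0" using BC(5) by linarith
  then have "\<alpha> k > 0" using lam_gt_1 by (simp add: zero_less_mult_iff)
  with BC show ?thesis using that grad_Suc_nth[of k] k by simp
qed

lemma grad_nonzero:
  assumes "k \<ge> 1"
  shows "g k $ 1 \<noteq> 0" "g k $ 2 \<noteq> 0" "\<alpha> k > 0"
proof -
  have "\<alpha> k > 0 \<and> g k $ 1 \<noteq> 0 \<and> g k $ 2 \<noteq> 0 \<and> g (Suc k) $ 1 \<noteq> 0 \<and> g (Suc k) $ 2 \<noteq> 0"
    using assms
  proof (induction k rule: nat_induct_at_least)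
    case base
    then show ?case using alpha_1_pos grad_1_nonzero grad_2_nonzero by (simp add: numeral_2_eq_2)
  next
    case (Suc n)
    obtain B C where "0 < C" "C \<le> B" "B \<le> lam * C" "\<alpha> (Suc n) > 0"
      "g (Suc (Suc n)) $ 1 = (lam - 1) * (g n $ 2)^2 * B * g (Suc n) $ 1"
      "g (Suc (Suc n)) $ 2 = - ((lam - 1) * (g n $ 1)^2 * C) * g (Suc n) $ 2"
      by (rule grad_Suc_factors[of "Suc n"]) (use Suc in simp_all)
    then show ?case using Suc.IH lam_gt_1 by simp
  qed
  then show "g k $ 1 \<noteq> 0" "g k $ 2 \<noteq> 0" "\<alpha> k > 0" by simp_all
qed

lemma log_ratio_recurrence:
  assumes k: "k \<ge> 2"
  shows "log_ratio (Suc k) - log_ratio k + 2 * log_ratio (k-1) \<in> {0..2 * ln lam}"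
proof -
  define r where "r j = (g j $ 1)^2 / (g j $ 2)^2" for j
  have nz: "g (k-1) $ 1 \<noteq> 0" "g (k-1) $ 2 \<noteq> 0" "\<alpha> (k-1) \<noteq> 0" "g k $ 1 \<noteq> 0" "g k $ 2 \<noteq> 0"
    using grad_nonzero[of "k-1"] grad_nonzero[of k] k by (simp_all add: Suc_le_eq)
  obtain B C where BC: "0 < C" "C \<le> B" "B \<le> lam * C"
    "g (Suc k) $ 1 = (lam - 1) * (g (k-1) $ 2)^2 * B * g k $ 1"
    "g (Suc k) $ 2 = - ((lam - 1) * (g (k-1) $ 1)^2 * C) * g k $ 2"
    using grad_Suc_factors[OF k nz(3,1,2)] by blast
  have "r (Suc k) = r k * (B / C)^2 / (r (k-1))^2"
  proof -
    define l where "l = lam - 1"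
    have "l \<noteq> 0" using lam_gt_1 by (simp add: l_def)
    then show ?thesis
      using nz BC(1) unfolding r_def BC(4,5) l_def[symmetric]
      by (simp add: field_simps power2_eq_square)
  qed
  moreover have "r k > 0" "r (k-1) > 0" "B > 0" "C > 0" using nz BC(1,2) unfolding r_def by auto
  ultimately have "log_ratio (Suc k) = log_ratio k + 2 * ln (B / C) - 2 * log_ratio (k-1)"
    unfolding log_ratio_def r_def[symmetric] by (simp add: ln_div ln_mult ln_realpow)
  moreover have "0 \<le> ln (B / C)" "ln (B / C) \<le> ln lam"
    using BC(1-3) lam_gt_1 by (simp_all add: field_simps)
  ultimately show ?thesis by simp
qed

end

lemma quadratic_root_norms:
  fixes \<theta> :: complex
  assumes "\<theta>^2 - \<theta> + 2 = 0"
  shows "cmod \<theta> = sqrt 2" "cmod (\<theta> - 1) = sqrt 2"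
proof -
  have re: "(Re \<theta>)^2 - (Im \<theta>)^2 - Re \<theta> + 2 = 0" and im: "Im \<theta> * (2 * Re \<theta> - 1) = 0"
    using arg_cong[OF assms, of Re] arg_cong[OF assms, of Im]
    by (simp_all add: power2_eq_square algebra_simps)
  have "Im \<theta> \<noteq> 0"
  proof
    assume "Im \<theta> = 0"
    with re have "(Re \<theta> - 1/2)^2 + 7/4 = 0" by (simp add: power2_eq_square algebra_simps)
    moreover have "(Re \<theta> - 1/2)^2 \<ge> 0" by simp
    ultimately show False by linarith
  qed
  with im have re_half: "Re \<theta> = 1/2" by simp
  with re have im_sq: "Im \<theta> * Im \<theta> = 7/4" by (simp add: power2_eq_square)
  have "(cmod \<theta>)^2 = 2" "(cmod (\<theta> - 1))^2 = 2"
    unfolding cmod_power2 by (simp_all add: power2_eq_square re_half im_sq)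
  then show "cmod \<theta> = sqrt 2" "cmod (\<theta> - 1) = sqrt 2"
    by (metis norm_ge_zero real_sqrt_unique)+
qed

lemma norm_growth_perturbed_mult:
  fixes z :: "nat \<Rightarrow> 'a::real_normed_div_algebra"
  assumes w: "norm w = \<rho>" "\<rho> > 1"
    and pert: "\<And>k. k \<ge> m \<Longrightarrow> norm (z (Suc k) - w * z k) \<le> L"
    and "k \<ge> m"
  shows "norm (z k) \<ge> L / (\<rho> - 1) + (norm (z m) - L / (\<rho> - 1)) * \<rho> ^ (k - m)"
  using \<open>k \<ge> m\<close>
proof (induction k rule: dec_induct)
  case base
  then show ?case by simp
next
  case (step n)
  have "norm (z (Suc n)) \<ge> \<rho> * norm (z n) - L"
    using norm_triangle_ineq2[of "w * z n" "w * z n - z (Suc n)"] pert[OF step.hyps(1)] w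
    by (simp add: norm_mult norm_minus_commute)
  moreover have "\<rho> * norm (z n) \<ge> \<rho> * (L / (\<rho> - 1) + (norm (z m) - L / (\<rho> - 1)) * \<rho> ^ (n - m))"
    using step.IH w by (simp add: mult_left_mono)
  moreover have "\<rho> * (L / (\<rho> - 1)) - L = L / (\<rho> - 1)" using w by (simp add: field_simps)
  moreover have "\<rho> ^ (Suc n - m) = \<rho> * \<rho> ^ (n - m)" using step.hyps(1) by (simp add: Suc_diff_le)
  ultimately show ?case by (simp add: algebra_simps)
qed

lemma three_term_window:
  fixes a b m :: real
  assumes "a \<le> m" "b \<le> m" "-2 * a - b \<le> m"
  shows "\<bar>b\<bar> + sqrt 2 * \<bar>a\<bar> \<le> (3 + sqrt 2) * m"
proof -
  have "\<bar>a\<bar> \<le> m" "\<bar>b\<bar> \<le> 3 * m" using assms by auto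
  then have "\<bar>b\<bar> + sqrt 2 * \<bar>a\<bar> \<le> 3 * m + sqrt 2 * m" by (simp add: add_mono mult_left_mono)
  then show ?thesis by (simp only: distrib_right)
qed

lemma sqrt2_window_constant: "2 * (3 + sqrt 2) * (sqrt 2 - 1)^2 \<le> 3 - sqrt 2"
proof -
  have "7/5 \<le> sqrt 2" by (rule real_le_rsqrt) (simp add: power2_eq_square)
  moreover have "2 * (3 + sqrt 2) * (sqrt 2 - 1)^2 = 10 - 6 * sqrt 2"
    by (simp add: power2_eq_square algebra_simps)
  ultimately show ?thesis by simp
qed

lemma log_ratio_amplitude:
  fixes M :: "nat \<Rightarrow> real" and \<theta> :: complex
  assumes L: "L \<ge> 0" and theta: "\<theta>^2 - \<theta> + 2 = 0"
    and rec: "\<And>k. k \<ge> 2 \<Longrightarrow> M (Suc k) - M k + 2 * M (k-1) \<in> {0..L}"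
    and start: "cmod (of_real (M 2) + (\<theta> - 1) * of_real (M 1)) > 4 * L"
    and k: "k \<ge> 2"
  shows "(3 + sqrt 2) * ((sqrt 2 - 1)^2 * 2 powr (real k / 2) * L) \<le> \<bar>M k\<bar> + sqrt 2 * \<bar>M (k-1)\<bar>"
proof -
  define \<xi> where "\<xi> j = complex_of_real (M j) + (\<theta> - 1) * of_real (M (j-1))" for j
  have norms: "cmod \<theta> = sqrt 2" "cmod (\<theta> - 1) = sqrt 2" using quadratic_root_norms[OF theta] by auto
  have \<theta>_prod: "\<theta> * (\<theta> - 1) = -2" using theta by (simp add: power2_eq_square algebra_simps)
  have "cmod (\<xi> (Suc j) - \<theta> * \<xi> j) \<le> L" if "j \<ge> 2" for j
  proof -
    have "\<theta> * \<xi> j = \<theta> * of_real (M j) + (\<theta> * (\<theta> - 1)) * of_real (M (j-1))"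
      by (simp add: \<xi>_def algebra_simps)
    then have "\<xi> (Suc j) - \<theta> * \<xi> j = of_real (M (Suc j) - M j + 2 * M (j-1))"
      unfolding \<theta>_prod by (simp add: \<xi>_def algebra_simps)
    then show ?thesis using rec[OF that] by (metis atLeastAtMost_iff abs_of_nonneg norm_of_real)
  qed
  then have grow: "cmod (\<xi> k) \<ge> L / (sqrt 2 - 1) + (cmod (\<xi> 2) - L / (sqrt 2 - 1)) * sqrt 2 ^ (k - 2)"
    using norm_growth_perturbed_mult[OF norms(1) _ _ k] by simp
  have "L / (sqrt 2 - 1) = (sqrt 2 + 1) * L"
    by (simp add: field_simps)
  then have "cmod (\<xi> 2) - L / (sqrt 2 - 1) \<ge> (3 - sqrt 2) * L"
    using start by (simp add: \<xi>_def algebra_simps)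
  then have "(cmod (\<xi> 2) - L / (sqrt 2 - 1)) * sqrt 2 ^ (k - 2) \<ge> (3 - sqrt 2) * L * sqrt 2 ^ (k - 2)"
    by (rule mult_right_mono) simp
  moreover have "L / (sqrt 2 - 1) \<ge> 0" using L by simp
  ultimately have "cmod (\<xi> k) \<ge> (3 - sqrt 2) * L * sqrt 2 ^ (k - 2)"
    using grow by linarith
  moreover have "cmod (\<xi> k) \<le> \<bar>M k\<bar> + sqrt 2 * \<bar>M (k-1)\<bar>"
    using norm_triangle_ineq[of "of_real (M k)" "(\<theta> - 1) * of_real (M (k-1))"]
    by (simp add: \<xi>_def norm_mult norms)
  moreover have "2 powr (real k / 2) = 2 * sqrt 2 ^ (k - 2)"
  proof -
    have "2 powr (real k / 2) = sqrt 2 ^ k"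
      by (simp add: powr_half_sqrt[symmetric] powr_realpow[symmetric] powr_powr)
    also have "\<dots> = sqrt 2 ^ 2 * sqrt 2 ^ (k - 2)"
      using k by (metis le_add_diff_inverse power_add)
    finally show ?thesis by simp
  qed
  moreover have "2 * (3 + sqrt 2) * (sqrt 2 - 1)^2 * (L * sqrt 2 ^ (k - 2))
      \<le> (3 - sqrt 2) * (L * sqrt 2 ^ (k - 2))"
    using sqrt2_window_constant L by (intro mult_right_mono) auto
  ultimately show ?thesis by (simp add: algebra_simps)
qed

lemma oscillation_bounds:
  fixes M :: "nat \<Rightarrow> real" and \<theta> :: complex
  assumes L: "L \<ge> 0" and theta: "\<theta>^2 - \<theta> + 2 = 0"
    and rec: "\<And>k. k \<ge> 2 \<Longrightarrow> M (Suc k) - M k + 2 * M (k-1) \<in> {0..L}"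
    and start: "cmod (of_real (M 2) + (\<theta> - 1) * of_real (M 1)) > 4 * L"
    and k: "k \<ge> 2"
  shows "Max (M ` {k-1..k+3}) \<ge> (sqrt 2 - 1)^2 * 2 powr (real k / 2) * L - 2 * L \<and>
     Min (M ` {k-1..k+3}) \<le> - ((sqrt 2 - 1)^2 * 2 powr (real k / 2) * L) + 2 * L"
proof -
  define X where "X = (sqrt 2 - 1)^2 * 2 powr (real k / 2) * L"
  define a b e where "a = M (k-1)" and "b = M k" and "e = M (k+2)"
  have amp: "(3 + sqrt 2) * X \<le> \<bar>b\<bar> + sqrt 2 * \<bar>a\<bar>"
    unfolding X_def a_def b_def by (rule log_ratio_amplitude[OF L theta rec start k])
  have pos: "3 + sqrt 2 > 0" by (simp add: add_pos_nonneg)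
  have e: "-2 * a - b \<le> e" "e \<le> -2 * a - b + 2 * L"
    using rec[OF k] rec[of "Suc k"] k unfolding a_def b_def e_def by auto
  have "(3 + sqrt 2) * X \<le> (3 + sqrt 2) * max a (max b (-2 * a - b))"
    using amp by (rule order_trans) (rule three_term_window, auto)
  then have up: "X \<le> max a (max b (-2 * a - b))" using pos by simp
  have "(3 + sqrt 2) * X \<le> (3 + sqrt 2) * max (-a) (max (-b) (2 * a + b))"
    using amp by (rule order_trans) (rule three_term_window[of "-a" _ "-b", simplified], auto)
  then have down: "X \<le> max (-a) (max (-b) (2 * a + b))" using pos by simp
  have fin: "finite (M ` {k-1..k+3})" by simp
  have mem: "a \<in> M ` {k-1..k+3}" "b \<in> M ` {k-1..k+3}" "e \<in> M ` {k-1..k+3}"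
    unfolding a_def b_def e_def by auto
  have "max a (max b e) \<ge> X" using up e(1) by (auto simp: le_max_iff_disj)
  moreover have "min a (min b e) \<le> - X + 2 * L" using down e(2) L by (auto simp: le_max_iff_disj)
  moreover have "Max (M ` {k-1..k+3}) \<ge> max a (max b e)" using Max_ge[OF fin] mem by auto
  moreover have "Min (M ` {k-1..k+3}) \<le> min a (min b e)" using Min_le[OF fin] mem by auto
  ultimately show ?thesis using L unfolding X_def[symmetric] by linarith
qed

theorem lemma2:
  fixes lam :: real and x :: "nat \<Rightarrow> real^2" and \<alpha> \<gamma> :: "nat \<Rightarrow> real"
    and \<theta> :: complex
  defines "g \<equiv> (\<lambda>k. diagA lam *v x k)"
  defines "M \<equiv> (\<lambda>k. ln ((g k $ 1)^2 / (g k $ 2)^2))"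
  defines "\<xi> \<equiv> (\<lambda>k. complex_of_real (M k) + (\<theta> - 1) * complex_of_real (M (k - 1)))"
  assumes lam: "lam > 1"
    and alpha1: "\<alpha> 1 > 0"
    and iter: "\<And>k. k \<ge> 1 \<Longrightarrow> x (Suc k) = x k - \<alpha> k *\<^sub>R g k"
    and step: "\<And>k. k \<ge> 2 \<Longrightarrow>
       \<alpha> k = \<gamma> k * (((x k - x (k-1)) \<bullet> (x k - x (k-1))) / ((x k - x (k-1)) \<bullet> (g k - g (k-1))))
           + (1 - \<gamma> k) * (((x k - x (k-1)) \<bullet> (g k - g (k-1))) / ((g k - g (k-1)) \<bullet> (g k - g (k-1))))"
    and gamma: "\<And>k. k \<ge> 2 \<Longrightarrow> 0 < \<gamma> k \<and> \<gamma> k < 1"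
    and nz: "\<And>i. g 1 $ i \<noteq> 0" "\<And>i. g 2 $ i \<noteq> 0"
    and theta: "\<theta>^2 - \<theta> + 2 = 0"
    and xi2: "cmod (\<xi> 2) > 8 * ln lam"
  shows "\<exists>c1>0. \<forall>k\<ge>2.
     Max (M ` {k-1..k+3}) \<ge> (sqrt 2 - 1)^2 * 2 powr (real k / 2) * c1 - 2 * c1 \<and>
     Min (M ` {k-1..k+3}) \<le> - ((sqrt 2 - 1)^2 * 2 powr (real k / 2) * c1) + 2 * c1"
proof -
  interpret hybrid_bb_iteration lam x g \<alpha> \<gamma>
    using lam alpha1 iter step gamma nz by unfold_locales (simp_all add: g_def)
  have "M = log_ratio" by (simp add: fun_eq_iff M_def log_ratio_def)
  then have rec: "\<And>k. k \<ge> 2 \<Longrightarrow> M (Suc k) - M k + 2 * M (k-1) \<in> {0..2 * ln lam}"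
    using log_ratio_recurrence by simp
  have start: "cmod (of_real (M 2) + (\<theta> - 1) * of_real (M 1)) > 4 * (2 * ln lam)"
    using xi2 by (simp add: \<xi>_def)
  have "2 * ln lam > 0" using lam by simp
  then show ?thesis
    using oscillation_bounds[OF _ theta rec start] by (intro exI[of _ "2 * ln lam"]) auto
qed

end
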